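(* Let $(\mathfrak g,[-,-]_{\mathfrak g})$ be a Lie algebra, $(\rho,V)$ a representation of it, and $T:V\to\mathfrak g$ an anti-$\mathcal O$-operator of $(\mathfrak g,[-,-]_{\mathfrak g})$ associated to $(\rho,V)$. Define $\circ:V\otimes V\to V$ by $u\circ v=-\rho(T(u))v$. Then $(V,\circ)$ satisfies $u\circ(v\circ w)-v\circ(u\circ w)=[v,u]\circ w$ for all $u,v,w\in V$, where $[u,v]=u\circ v-v\circ u$. Moreover, $(V,\circ)$ is an anti-pre-Lie algebra (in particular Lie-admissible) if and only if $T$ is strong. In this case, $T$ is a homomorphism of Lie algebras from $(V,[-,-])$ to $(\mathfrak g,[-,-]_{\mathfrak g})$; furthermore, $T(u)\circ_{\mathfrak g}T(v)=T(u\circ v)$ ($u,v\in V$) defines an anti-pre-Lie algebra structure on $T(V)\subset\mathfrak g$, and $T$ is a homomorphism of anti-pre-Lie algebras from $(V,\circ)$ to $(T(V),\circ_{\mathfrak g})$.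
   Context: All vector spaces are finite-dimensional over a field $\mathbb F$ of characteristic $0$. An anti-pre-Lie algebra is a vector space $A$ with a bilinear operation $\circ$ such that, writing $[x,y]=x\circ y-y\circ x$, for all $x,y,z\in A$: (i) $x\circ(y\circ z)-y\circ(x\circ z)=[y,x]\circ z$, and (ii) $[x,y]\circ z+[y,z]\circ x+[z,x]\circ y=0$. A linear map $T:V\to\mathfrak g$ is an anti-$\mathcal O$-operator associated to a representation $(\rho,V)$ if $[T(u),T(v)]_{\mathfrak g}=T(\rho(T(v))u-\rho(T(u))v)$ for all $u,v\in V$; it is strong if moreover $\rho([T(u),T(v)]_{\mathfrak g})w+\rho([T(v),T(w)]_{\mathfrak g})u+\rho([T(w),T(u)]_{\mathfrak g})v=0$ for all $u,v,w\in V$. *)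

theory Defs
  imports Complex_Main
begin

definition fin_dim_vs :: "('k::field \<Rightarrow> 'v::ab_group_add \<Rightarrow> 'v) \<Rightarrow> bool" where
  "fin_dim_vs sc \<longleftrightarrow> vector_space sc \<and> (\<exists>B. finite B \<and> (\<forall>v. \<exists>c. v = (\<Sum>b\<in>B. sc (c b) b)))"

definition bilinear_on :: "('k::field \<Rightarrow> 'v::ab_group_add \<Rightarrow> 'v) \<Rightarrow> 'v set \<Rightarrow> ('v \<Rightarrow> 'v \<Rightarrow> 'v) \<Rightarrow> bool" where
  "bilinear_on sc S m \<longleftrightarrow>
     (\<forall>x\<in>S. \<forall>y\<in>S. \<forall>z\<in>S. m (x + y) z = m x z + m y z \<and> m z (x + y) = m z x + m z y) \<and>
     (\<forall>a. \<forall>x\<in>S. \<forall>y\<in>S. m (sc a x) y = sc a (m x y) \<and> m x (sc a y) = sc a (m x y))"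

definition lie_algebra :: "('k::field \<Rightarrow> 'g::ab_group_add \<Rightarrow> 'g) \<Rightarrow> ('g \<Rightarrow> 'g \<Rightarrow> 'g) \<Rightarrow> bool" where
  "lie_algebra sc br \<longleftrightarrow> vector_space sc \<and> bilinear_on sc UNIV br \<and>
     (\<forall>x. br x x = 0) \<and>
     (\<forall>x y z. br x (br y z) + br y (br z x) + br z (br x y) = 0)"

definition representation ::
  "('k::field \<Rightarrow> 'g::ab_group_add \<Rightarrow> 'g) \<Rightarrow> ('g \<Rightarrow> 'g \<Rightarrow> 'g) \<Rightarrow>
   ('k \<Rightarrow> 'v::ab_group_add \<Rightarrow> 'v) \<Rightarrow> ('g \<Rightarrow> 'v \<Rightarrow> 'v) \<Rightarrow> bool" where
  "representation scg br scv \<rho> \<longleftrightarrow> vector_space scv \<and>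
     (\<forall>x y v. \<rho> (x + y) v = \<rho> x v + \<rho> y v) \<and>
     (\<forall>a x v. \<rho> (scg a x) v = scv a (\<rho> x v)) \<and>
     (\<forall>x. Vector_Spaces.linear scv scv (\<rho> x)) \<and>
     (\<forall>x y v. \<rho> (br x y) v = \<rho> x (\<rho> y v) - \<rho> y (\<rho> x v))"

definition commutator :: "('v::ab_group_add \<Rightarrow> 'v \<Rightarrow> 'v) \<Rightarrow> 'v \<Rightarrow> 'v \<Rightarrow> 'v" where
  "commutator m x y = m x y - m y x"

definition anti_pre_Lie_on :: "('k::field \<Rightarrow> 'v::ab_group_add \<Rightarrow> 'v) \<Rightarrow> 'v set \<Rightarrow> ('v \<Rightarrow> 'v \<Rightarrow> 'v) \<Rightarrow> bool" where
  "anti_pre_Lie_on sc S m \<longleftrightarrow> vector_space sc \<and> (0 \<in> S \<and> (\<forall>x\<in>S. \<forall>y\<in>S. x + y \<in> S) \<and> (\<forall>a. \<forall>x\<in>S. sc a x \<in> S)) \<and>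
     (\<forall>x\<in>S. \<forall>y\<in>S. m x y \<in> S) \<and> bilinear_on sc S m \<and>
     (\<forall>x\<in>S. \<forall>y\<in>S. \<forall>z\<in>S. m x (m y z) - m y (m x z) = m (commutator m y x) z) \<and>
     (\<forall>x\<in>S. \<forall>y\<in>S. \<forall>z\<in>S.
        m (commutator m x y) z + m (commutator m y z) x + m (commutator m z x) y = 0)"

abbreviation anti_pre_Lie where "anti_pre_Lie sc m \<equiv> anti_pre_Lie_on sc UNIV m"

definition anti_O_operator ::
  "('k::field \<Rightarrow> 'g::ab_group_add \<Rightarrow> 'g) \<Rightarrow> ('g \<Rightarrow> 'g \<Rightarrow> 'g) \<Rightarrow>
   ('k \<Rightarrow> 'v::ab_group_add \<Rightarrow> 'v) \<Rightarrow> ('g \<Rightarrow> 'v \<Rightarrow> 'v) \<Rightarrow> ('v \<Rightarrow> 'g) \<Rightarrow> bool" where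
  "anti_O_operator scg br scv \<rho> T \<longleftrightarrow> Vector_Spaces.linear scv scg T \<and>
     (\<forall>u v. br (T u) (T v) = T (\<rho> (T v) u - \<rho> (T u) v))"

definition strong_anti_O_operator ::
  "('k::field \<Rightarrow> 'g::ab_group_add \<Rightarrow> 'g) \<Rightarrow> ('g \<Rightarrow> 'g \<Rightarrow> 'g) \<Rightarrow>
   ('k \<Rightarrow> 'v::ab_group_add \<Rightarrow> 'v) \<Rightarrow> ('g \<Rightarrow> 'v \<Rightarrow> 'v) \<Rightarrow> ('v \<Rightarrow> 'g) \<Rightarrow> bool" where
  "strong_anti_O_operator scg br scv \<rho> T \<longleftrightarrow> anti_O_operator scg br scv \<rho> T \<and>
     (\<forall>u v w. \<rho> (br (T u) (T v)) w + \<rho> (br (T v) (T w)) u + \<rho> (br (T w) (T u)) v = 0)"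

definition lie_hom ::
  "('k::field \<Rightarrow> 'v::ab_group_add \<Rightarrow> 'v) \<Rightarrow> ('v \<Rightarrow> 'v \<Rightarrow> 'v) \<Rightarrow>
   ('k \<Rightarrow> 'g::ab_group_add \<Rightarrow> 'g) \<Rightarrow> ('g \<Rightarrow> 'g \<Rightarrow> 'g) \<Rightarrow> ('v \<Rightarrow> 'g) \<Rightarrow> bool" where
  "lie_hom scv brv scg brg T \<longleftrightarrow> Vector_Spaces.linear scv scg T \<and>
     (\<forall>u v. T (brv u v) = brg (T u) (T v))"

end

theory Submission
  imports Defs
begin

text \<open>Writing \<open>u \<circ> v = -\<rho>(T u) v\<close>, the anti-\<open>\<O>\<close>-operator identity says exactly that
\<open>T [u, v] = [T u, T v]\<close>, and then the representation property of \<open>\<rho>\<close> gives the first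
anti-pre-Lie identity for free. The cyclic sum of \<open>[x, y] \<circ> z\<close> is minus the cyclic sum
of \<open>\<rho>([T x, T y]) z\<close>, so the second identity holds precisely when \<open>T\<close> is strong.
Every anti-pre-Lie algebra is Lie-admissible: by the first identity, the Jacobiator of the
commutator is minus the cyclic sum of the second. Finally each \<open>\<rho>(T u)\<close> preserves the
kernel of \<open>T\<close>, so the product descends to the image \<open>T(V)\<close>.\<close>

lemma bilinear_on_diff:
  assumes "bilinear_on sc UNIV m"
  shows "m (x - y) z = m x z - m y z" and "m z (x - y) = m z x - m z y"
proof -
  have add: "\<And>a b c. m (a + b) c = m a c + m b c" "\<And>a b c. m c (a + b) = m c a + m c b"
    using assms unfolding bilinear_on_def by simp_all
  show "m (x - y) z = m x z - m y z"
    using add(1)[of "x - y" y z] by (simp add: eq_diff_eq)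
  show "m z (x - y) = m z x - m z y"
    using add(2)[of z "x - y" y] by (simp add: eq_diff_eq)
qed

lemma bilinear_on_minus_left:
  assumes "bilinear_on sc UNIV m"
  shows "m (- x) z = - m x z"
  using bilinear_on_diff(1)[OF assms, of 0 x z] bilinear_on_diff(1)[OF assms, of 0 0 z] by simp

lemma bilinear_on_commutator:
  assumes "vector_space sc" and "bilinear_on sc UNIV m"
  shows "bilinear_on sc UNIV (commutator m)"
proof -
  have "sc a (x - y) = sc a x - sc a y" for a x y
    using assms(1) unfolding module_iff_vector_space[symmetric]
    by (rule module.scale_right_diff_distrib)
  then show ?thesis
    using assms(2) unfolding bilinear_on_def commutator_def by (simp add: algebra_simps)
qed

lemma lie_algebra_commutator_if_anti_pre_Lie:
  assumes "anti_pre_Lie sc m"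
  shows "lie_algebra sc (commutator m)"
proof -
  let ?c = "commutator m"
  have vs: "vector_space sc" and bil: "bilinear_on sc UNIV m"
    and left: "\<And>x y z. m x (m y z) - m y (m x z) = m (?c y x) z"
    and cyclic: "\<And>x y z. m (?c x y) z + m (?c y z) x + m (?c z x) y = 0"
    using assms unfolding anti_pre_Lie_on_def by auto
  have jacobi: "?c x (?c y z) + ?c y (?c z x) + ?c z (?c x y) = 0" for x y z
  proof -
    have expand: "?c a (?c b d) = m a (m b d) - m a (m d b) - m (?c b d) a" for a b d
      unfolding commutator_def[of m a] commutator_def[of m b d] by (simp add: bilinear_on_diff[OF bil])
    have swap: "\<And>a b d. m (?c b a) d = - m (?c a b) d"
      using bilinear_on_minus_left[OF bil] by (metis commutator_def minus_diff_eq)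
    have "?c x (?c y z) + ?c y (?c z x) + ?c z (?c x y)
        = (m x (m y z) - m y (m x z)) + (m y (m z x) - m z (m y x)) + (m z (m x y) - m x (m z y))
          - (m (?c y z) x + m (?c z x) y + m (?c x y) z)"
      unfolding expand by (simp add: algebra_simps)
    also have "\<dots> = - (m (?c x y) z + m (?c y z) x + m (?c z x) y)
        - (m (?c y z) x + m (?c z x) y + m (?c x y) z)"
      unfolding left swap[of y x] swap[of z y] swap[of x z] by (simp add: algebra_simps)
    also have "\<dots> = 0"
      using cyclic[of x y z] by (simp add: add_ac)
    finally show ?thesis .
  qed
  show ?thesis
    unfolding lie_algebra_def using vs bilinear_on_commutator[OF vs bil] jacobi
    by (simp add: commutator_def)
qed

lemma ex_product_on_range:
  assumes "\<And>u u' v v'. T u = T u' \<Longrightarrow> T v = T v' \<Longrightarrow> T (m u v) = T (m u' v')"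
  shows "\<exists>mg. \<forall>u v. mg (T u) (T v) = T (m u v)"
proof
  show "\<forall>u v. (\<lambda>a b. T (m (inv T a) (inv T b))) (T u) (T v) = T (m u v)"
    by (auto intro: assms simp: f_inv_into_f)
qed

lemma anti_pre_Lie_on_range:
  assumes apl: "anti_pre_Lie scv m" and vsg: "vector_space scg"
    and lin: "Vector_Spaces.linear scv scg T"
    and mg: "\<And>u v. mg (T u) (T v) = T (m u v)"
  shows "anti_pre_Lie_on scg (range T) mg"
proof -
  interpret T: module_hom scv scg T
    using lin by (simp add: module_hom_iff_linear)
  have bil: "bilinear_on scv UNIV m"
    and left: "\<And>x y z. m x (m y z) - m y (m x z) = m (commutator m y x) z"
    and cyclic: "\<And>x y z. m (commutator m x y) z + m (commutator m y z) x + m (commutator m z x) y = 0"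
    using apl unfolding anti_pre_Lie_on_def by auto
  have mg_commutator: "commutator mg (T u) (T v) = T (commutator m u v)" for u v
    by (simp add: commutator_def mg T.diff)
  have closed: "a + b \<in> range T" "scg k a \<in> range T" "mg a b \<in> range T"
    if "a \<in> range T" "b \<in> range T" for a b k
    using that by (auto simp: mg simp flip: T.add T.scale)
  have bilinear: "bilinear_on scg (range T) mg"
    using bil unfolding bilinear_on_def by (auto simp: mg simp flip: T.add T.scale)
  have left_range: "mg a (mg b c) - mg b (mg a c) = mg (commutator mg b a) c"
    and cyclic_range: "mg (commutator mg a b) c + mg (commutator mg b c) a + mg (commutator mg c a) b = 0"
    if "a \<in> range T" "b \<in> range T" "c \<in> range T" for a b c
  proof -
    from that obtain u v w where abc: "a = T u" "b = T v" "c = T w"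
      by blast
    have "mg a (mg b c) - mg b (mg a c) = T (m u (m v w) - m v (m u w))"
      by (simp add: abc mg T.diff)
    then show "mg a (mg b c) - mg b (mg a c) = mg (commutator mg b a) c"
      by (simp add: abc left mg mg_commutator)
    have "mg (commutator mg a b) c + mg (commutator mg b c) a + mg (commutator mg c a) b
        = T (m (commutator m u v) w + m (commutator m v w) u + m (commutator m w u) v)"
      by (simp add: abc mg mg_commutator T.add)
    then show "mg (commutator mg a b) c + mg (commutator mg b c) a + mg (commutator mg c a) b = 0"
      by (simp add: cyclic)
  qed
  have "0 \<in> range T"
    by (metis T.zero rangeI)
  then show ?thesis
    unfolding anti_pre_Lie_on_def
    by (intro conjI ballI allI vsg closed bilinear left_range cyclic_range)
qed

locale anti_O_product =
  fixes scg :: "'k::field \<Rightarrow> 'g::ab_group_add \<Rightarrow> 'g"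
    and br :: "'g \<Rightarrow> 'g \<Rightarrow> 'g"
    and scv :: "'k \<Rightarrow> 'v::ab_group_add \<Rightarrow> 'v"
    and \<rho> :: "'g \<Rightarrow> 'v \<Rightarrow> 'v"
    and T :: "'v \<Rightarrow> 'g"
    and circ :: "'v \<Rightarrow> 'v \<Rightarrow> 'v"
  assumes lie: "lie_algebra scg br"
    and rep: "representation scg br scv \<rho>"
    and anti_O: "anti_O_operator scg br scv \<rho> T"
    and circ_def: "circ u v = - \<rho> (T u) v"
begin

lemma vector_space_g: "vector_space scg"
  and bilinear_br: "bilinear_on scg UNIV br"
  using lie by (auto simp: lie_algebra_def)

lemma vector_space_v: "vector_space scv"
  and rho_add_left: "\<rho> (x + y) v = \<rho> x v + \<rho> y v"
  and rho_scale_left: "\<rho> (scg a x) v = scv a (\<rho> x v)"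
  and rho_linear: "Vector_Spaces.linear scv scv (\<rho> x)"
  and rho_br: "\<rho> (br x y) v = \<rho> x (\<rho> y v) - \<rho> y (\<rho> x v)"
  using rep by (auto simp: representation_def)

lemma T_linear: "Vector_Spaces.linear scv scg T"
  and T_br: "br (T u) (T v) = T (\<rho> (T v) u - \<rho> (T u) v)"
  using anti_O by (auto simp: anti_O_operator_def)

sublocale T: module_hom scv scg T
  using T_linear by (simp add: module_hom_iff_linear)

lemma rho_hom: "module_hom scv scv (\<rho> x)"
  using rho_linear by (simp add: module_hom_iff_linear)

lemma rho_hom_left: "module_hom scg scv (\<lambda>x. \<rho> x v)"
  using vector_space_g vector_space_v
  by unfold_locales (simp_all add: module_iff_vector_space rho_add_left rho_scale_left)

lemma commutator_circ: "commutator circ u v = \<rho> (T v) u - \<rho> (T u) v"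
  by (simp add: commutator_def circ_def)

lemma T_commutator_circ: "T (commutator circ u v) = br (T u) (T v)"
  by (simp add: commutator_circ T_br)

lemma circ_left_commutator: "circ u (circ v w) - circ v (circ u w) = circ (commutator circ v u) w"
  by (simp add: circ_def T_commutator_circ rho_br module_hom.neg[OF rho_hom])

lemma circ_cyclic_commutator_sum:
  "circ (commutator circ x y) z + circ (commutator circ y z) x + circ (commutator circ z x) y
    = - (\<rho> (br (T x) (T y)) z + \<rho> (br (T y) (T z)) x + \<rho> (br (T z) (T x)) y)"
  by (simp add: circ_def T_commutator_circ)

lemma bilinear_circ: "bilinear_on scv UNIV circ"
proof -
  have "scv a (- v) = - scv a v" for a v
    using vector_space_v unfolding module_iff_vector_space[symmetric]
    by (rule module.scale_minus_right)
  then show ?thesis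
    unfolding bilinear_on_def
    by (simp add: circ_def T.add T.scale rho_add_left rho_scale_left
        module_hom.add[OF rho_hom] module_hom.scale[OF rho_hom])
qed

lemma anti_pre_Lie_iff_strong: "anti_pre_Lie scv circ \<longleftrightarrow> strong_anti_O_operator scg br scv \<rho> T"
proof -
  have "anti_pre_Lie scv circ \<longleftrightarrow>
      (\<forall>x y z. circ (commutator circ x y) z + circ (commutator circ y z) x
        + circ (commutator circ z x) y = 0)"
    unfolding anti_pre_Lie_on_def using vector_space_v bilinear_circ circ_left_commutator by auto
  also have "\<dots> \<longleftrightarrow>
      (\<forall>x y z. \<rho> (br (T x) (T y)) z + \<rho> (br (T y) (T z)) x + \<rho> (br (T z) (T x)) y = 0)"
    by (simp only: circ_cyclic_commutator_sum neg_equal_0_iff_equal)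
  also have "\<dots> \<longleftrightarrow> strong_anti_O_operator scg br scv \<rho> T"
    using anti_O by (simp add: strong_anti_O_operator_def)
  finally show ?thesis .
qed

lemma lie_hom_T: "lie_hom scv (commutator circ) scg br T"
  unfolding lie_hom_def using T_linear T_commutator_circ by simp

lemma T_rho_kernel:
  assumes "T v = 0"
  shows "T (\<rho> (T u) v) = 0"
proof -
  have "br (T u) (0 + 0) = br (T u) 0 + br (T u) 0"
    using bilinear_br unfolding bilinear_on_def by blast
  then have "br (T u) 0 = 0"
    by simp
  then show ?thesis
    using T_br[of u v] assms by (simp add: T.neg module_hom.zero[OF rho_hom_left])
qed

lemma T_circ_cong:
  assumes "T u = T u'" and "T v = T v'"
  shows "T (circ u v) = T (circ u' v')"
proof -
  have "T (\<rho> (T u) v) - T (\<rho> (T u) v') = T (\<rho> (T u) (v - v'))"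
    by (simp add: T.diff module_hom.diff[OF rho_hom])
  also have "\<dots> = 0"
    using assms(2) by (simp add: T_rho_kernel T.diff)
  finally show ?thesis
    using assms(1) by (simp add: circ_def T.neg)
qed

end

theorem proposition2p14:
  fixes scg :: "'k::field_char_0 \<Rightarrow> 'g::ab_group_add \<Rightarrow> 'g"
    and br :: "'g \<Rightarrow> 'g \<Rightarrow> 'g"
    and scv :: "'k \<Rightarrow> 'v::ab_group_add \<Rightarrow> 'v"
    and \<rho> :: "'g \<Rightarrow> 'v \<Rightarrow> 'v"
    and T :: "'v \<Rightarrow> 'g"
    and circ :: "'v \<Rightarrow> 'v \<Rightarrow> 'v"
  assumes "fin_dim_vs scg" and "fin_dim_vs scv"
    and "lie_algebra scg br"
    and "representation scg br scv \<rho>"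
    and "anti_O_operator scg br scv \<rho> T"
    and circ_def: "\<And>u v. circ u v = - \<rho> (T u) v"
  shows "(\<forall>u v w. circ u (circ v w) - circ v (circ u w) = circ (commutator circ v u) w)
    \<and> (anti_pre_Lie scv circ \<longleftrightarrow> strong_anti_O_operator scg br scv \<rho> T)
    \<and> (strong_anti_O_operator scg br scv \<rho> T \<longrightarrow>
         lie_algebra scv (commutator circ)
       \<and> lie_hom scv (commutator circ) scg br T
       \<and> (\<exists>circg :: 'g \<Rightarrow> 'g \<Rightarrow> 'g.
            (\<forall>u v. circg (T u) (T v) = T (circ u v))
          \<and> anti_pre_Lie_on scg (range T) circg))"
proof -
  interpret anti_O_product scg br scv \<rho> T circ
    using assms(3-6) by unfold_locales
  have strong_consequences: "lie_algebra scv (commutator circ)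
      \<and> lie_hom scv (commutator circ) scg br T
      \<and> (\<exists>circg. (\<forall>u v. circg (T u) (T v) = T (circ u v)) \<and> anti_pre_Lie_on scg (range T) circg)"
    if "strong_anti_O_operator scg br scv \<rho> T"
  proof -
    have apl: "anti_pre_Lie scv circ"
      using that anti_pre_Lie_iff_strong by simp
    obtain circg where circg: "\<And>u v. circg (T u) (T v) = T (circ u v)"
      using ex_product_on_range[of T circ] T_circ_cong by blast
    then have "anti_pre_Lie_on scg (range T) circg"
      by (rule anti_pre_Lie_on_range[OF apl vector_space_g T_linear])
    with circg show ?thesis
      using lie_algebra_commutator_if_anti_pre_Lie[OF apl] lie_hom_T by blast
  qed
  show ?thesis
    by (intro conjI allI impI circ_left_commutator anti_pre_Lie_iff_strong strong_consequences)
qed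

end
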